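(* Let $(A,\phi)$ be a step algebra over a field $\mathbb F$ and let $h:[2]\to\mathbb N$ be the map sending $1$ and $2$ to $1$. Then $a*b:=\phi_{h,(1,1)}(a,b)$ is a level algebra structure on $A$: it is bilinear, commutative, and satisfies $(a*b)*(c*d)=(a*c)*(b*d)$ for all $a,b,c,d\in A$.
   Context: $[n]=\{1,\dots,n\}$. For $n\ge1$, $\mathscr L'(n)$ is the set of $h:[n]\to\mathbb N$ with $\sum_i2^{-h(i)}=1$, with $\sigma\cdot h=h\circ\sigma^{-1}$; unit $1\in\mathscr L'(1)$, $1\mapsto0$; full composition: for $h\in\mathscr L'(n)$, $g_j\in\mathscr L'(m_j)$, $\mu(h\otimes g_1\otimes\dots\otimes g_n)$ sends $m_1+\dots+m_{j-1}+t$ ($1\le t\le m_j$) to $h(j)+g_j(t)$. Compositions ${\underline r}\in\mathrm{Comp}_p(n)$: nonnegative tuples with sum $n$, identified with partitions of $[n]$ into consecutive intervals ${\underline r}_i$ of lengths $r_i$. For an ordered partition $R$ of $[n]$, $\mathscr C_R$ = maps in $\mathscr L'(n)$ constant on each part. For $\rho\in\Sigma_p$: ${\underline r}^\rho=(r_{\rho^{-1}(i)})_i$, $\rho^*$ the associated block permutation with blocks of sizes $r_i$. ${\underline r}\circ_1(l,m)=(l,m,r_2,\dots,r_p)$. $\gamma_k(Q)=(\bigsqcup_{t=0}^{k-1}(Q_j+tm))_j$ for a partition $Q$ of $[m]$; $R\otimes Q=(R_1,\dots,R_p,Q_1+n,\dots,Q_s+n)$; ${\underline r}\diamond({\underline q}_i)_i=\gamma_{r_1}({\underline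 q}_1)\otimes\dots\otimes\gamma_{r_p}({\underline q}_p)$. A step algebra $(A,\phi)$: operations $\phi_{h,{\underline r}}:A^{\times p}\to A$ for ${\underline r}\in\mathrm{Comp}_p(n)$, $h\in\mathscr C_{\underline r}$ (and $\phi_{h,R}:=\phi_{\tau\cdot h,{\underline r}}$ for a partition $R$ and $\tau\in\Sigma_n$ with $\tau(R_i)={\underline r}_i$), satisfying (S1) $\phi_{\rho^*\cdot h,{\underline r}^\rho}(a_{\rho^{-1}(1)},\dots,a_{\rho^{-1}(p)})=\phi_{h,{\underline r}}(a_1,\dots,a_p)$; (S2) $\phi_{h,(0,{\underline r})}(a_0,a_1,\dots)=\phi_{h,{\underline r}}(a_1,\dots)$; (S3) $\phi_{h,{\underline r}}(\lambda a_1,\dots)=\lambda^{r_1}\phi_{h,{\underline r}}(a_1,\dots)$; (S4) $\binom{r_1}{l}\phi_{h,{\underline r}}(a_1,\dots,a_p)=\phi_{h,{\underline r}\circ_1(l,m)}(a_1,a_1,a_2,\dots,a_p)$ for $l+m=r_1$; (S5) $\phi_{h,{\underline r}}(a+b,a_2,\dots)=\sum_{l+m=r_1}\phi_{h,{\underline r}\circ_1(l,m)}(a,b,a_2,\dots)$; (S6) $\phi_{1,(1)}(a)=a$; (S7) for $g_i\in\mathscr C_{{\underline q}_i}$, ${\underline q}_i\in\mathrm{Comp}_{k_i}(m_i)$: $\phi_{h,{\underline r}}((\phi_{g_i,{\underline q}_i}(a_{ij})_j)_i)=\big(\prod_i\frac{1}{r_i!}\prod_j\frac{(r_iq_{ij})!}{(q_{ij}!)^{r_i}}\big)\phi_{\mu(h\otimes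 g_1^{\otimes r_1}\otimes\dots\otimes g_p^{\otimes r_p}),{\underline r}\diamond({\underline q}_i)_i}((a_{ij})_{i,j})$. *)

theory Defs
  imports Complex_Main "HOL-Combinatorics.Permutations"
begin

text \<open>Conventions: everything is 0-based. A map h : [n] \<rightarrow> \<nat> is a list of length n;
a composition r \<in> Comp_p(n) is a list of length p with sum n; arguments of an operation
are lists of length p. An ordered partition of [n] is a list of (possibly empty) sets.\<close>

definition Lp :: "nat \<Rightarrow> nat list set" where
  "Lp n = {h. n \<ge> 1 \<and> length h = n \<and> (\<Sum>x\<leftarrow>h. (1/2::real) ^ x) = 1}"

definition Comp :: "nat \<Rightarrow> nat \<Rightarrow> nat list set" where
  "Comp p n = {r. length r = p \<and> sum_list r = n}"

definition bstart :: "nat list \<Rightarrow> nat \<Rightarrow> nat" where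
  "bstart r i = sum_list (take i r)"

definition block :: "nat list \<Rightarrow> nat \<Rightarrow> nat set" where
  "block r i = {bstart r i ..< bstart r i + r ! i}"

definition blocks :: "nat list \<Rightarrow> nat set list" where
  "blocks r = map (block r) [0..<length r]"

definition blk_idx :: "nat list \<Rightarrow> nat \<Rightarrow> nat" where
  "blk_idx r x = (THE i. i < length r \<and> x \<in> block r i)"

definition ordpart :: "nat \<Rightarrow> nat set list \<Rightarrow> bool" where
  "ordpart n R \<longleftrightarrow> (\<Union>i<length R. R ! i) = {..<n} \<and>
      (\<forall>i<length R. \<forall>j<length R. i \<noteq> j \<longrightarrow> R ! i \<inter> R ! j = {})"

definition CR :: "nat \<Rightarrow> nat set list \<Rightarrow> nat list set" where
  "CR n R = {h. h \<in> Lp n \<and> (\<forall>i<length R. \<forall>x\<in>R ! i. \<forall>y\<in>R ! i. h ! x = h ! y)}"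

definition Cr :: "nat list \<Rightarrow> nat list set" where
  "Cr r = CR (sum_list r) (blocks r)"

definition act :: "(nat \<Rightarrow> nat) \<Rightarrow> nat list \<Rightarrow> nat list" where
  "act \<sigma> h = map (\<lambda>y. h ! inv_into {..<length h} \<sigma> y) [0..<length h]"

definition cperm :: "(nat \<Rightarrow> nat) \<Rightarrow> 'b list \<Rightarrow> 'b list" where
  "cperm \<rho> xs = map (\<lambda>i. xs ! inv \<rho> i) [0..<length xs]"

text \<open>rho^*: the block permutation sending block i of r onto block rho(i) of r^rho\<close>
definition block_perm :: "nat list \<Rightarrow> (nat \<Rightarrow> nat) \<Rightarrow> nat \<Rightarrow> nat" where
  "block_perm r \<rho> x = bstart (cperm \<rho> r) (\<rho> (blk_idx r x)) + (x - bstart r (blk_idx r x))"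

text \<open>phi_{h,R} := phi_{tau\<cdot>h, r} for tau with tau(R_i) = r_i\<close>
definition phiR :: "(nat list \<Rightarrow> nat list \<Rightarrow> 'a list \<Rightarrow> 'a) \<Rightarrow> nat list \<Rightarrow> nat set list \<Rightarrow> 'a list \<Rightarrow> 'a" where
  "phiR \<phi> h R as = (let r = map card R;
      \<tau> = (SOME \<tau>. bij_betw \<tau> {..<length h} {..<length h} \<and> (\<forall>i<length R. \<tau> ` (R ! i) = block r i))
     in \<phi> (act \<tau> h) r as)"

text \<open>full operadic composition mu(h \<otimes> g_1 \<otimes> ... \<otimes> g_n)\<close>
definition mu :: "nat list \<Rightarrow> nat list list \<Rightarrow> nat list" where
  "mu h gs = concat (map (\<lambda>j. map (\<lambda>x. h ! j + x) (gs ! j)) [0..<length h])"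

definition gammaP :: "nat \<Rightarrow> nat \<Rightarrow> nat set list \<Rightarrow> nat set list" where
  "gammaP k m Q = map (\<lambda>Qj. \<Union>t<k. (\<lambda>x. x + t * m) ` Qj) Q"

definition tensorP :: "nat set list \<Rightarrow> nat \<Rightarrow> nat set list \<Rightarrow> nat set list" where
  "tensorP R n Q = R @ map ((`) (\<lambda>x. x + n)) Q"

text \<open>r \<diamond> (q_i)_i = gamma_{r_1}(q_1) \<otimes> ... \<otimes> gamma_{r_p}(q_p), built left to right;
  the partition gamma_{r_i}(q_i) is a partition of [r_i m_i].\<close>
fun diamond_aux :: "nat set list \<Rightarrow> nat \<Rightarrow> (nat \<times> nat list) list \<Rightarrow> nat set list" where
  "diamond_aux R n [] = R"
| "diamond_aux R n ((k, q) # rest) =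
     diamond_aux (tensorP R n (gammaP k (sum_list q) (blocks q))) (n + k * sum_list q) rest"

definition diamond :: "nat list \<Rightarrow> nat list list \<Rightarrow> nat set list" where
  "diamond r qs = diamond_aux [] 0 (zip r qs)"

text \<open>The coefficient prod_i 1/r_i! prod_j (r_i q_ij)!/(q_ij!)^{r_i} of (S7); it is a
  natural number whenever every q_i has positive sum, which holds in (S7).\<close>
definition coefS7 :: "nat list \<Rightarrow> nat list list \<Rightarrow> nat" where
  "coefS7 r qs = (\<Prod>i<length r.
      (\<Prod>q\<leftarrow>qs ! i. fact (r ! i * q)) div (fact (r ! i) * (\<Prod>q\<leftarrow>qs ! i. fact q ^ (r ! i))))"

definition step_algebra ::
  "('k::field \<Rightarrow> 'a::ab_group_add \<Rightarrow> 'a) \<Rightarrow> (nat list \<Rightarrow> nat list \<Rightarrow> 'a list \<Rightarrow> 'a) \<Rightarrow> bool" where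
  "step_algebra scale \<phi> \<longleftrightarrow>
   \<comment> \<open>(S1)\<close>
   (\<forall>r h as \<rho>. h \<in> Cr r \<and> length as = length r \<and> \<rho> permutes {..<length r} \<longrightarrow>
       \<phi> (act (block_perm r \<rho>) h) (cperm \<rho> r) (cperm \<rho> as) = \<phi> h r as) \<and>
   \<comment> \<open>(S2)\<close>
   (\<forall>r h a0 as. h \<in> Cr r \<and> length as = length r \<longrightarrow>
       \<phi> h (0 # r) (a0 # as) = \<phi> h r as) \<and>
   \<comment> \<open>(S3)\<close>
   (\<forall>r1 r h c a1 as. h \<in> Cr (r1 # r) \<and> length as = length r \<longrightarrow>
       \<phi> h (r1 # r) (scale c a1 # as) = scale (c ^ r1) (\<phi> h (r1 # r) (a1 # as))) \<and>
   \<comment> \<open>(S4)\<close>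
   (\<forall>l m r h a1 as. h \<in> Cr ((l + m) # r) \<and> length as = length r \<longrightarrow>
       scale (of_nat ((l + m) choose l)) (\<phi> h ((l + m) # r) (a1 # as))
         = \<phi> h (l # m # r) (a1 # a1 # as)) \<and>
   \<comment> \<open>(S5)\<close>
   (\<forall>r1 r h a b as. h \<in> Cr (r1 # r) \<and> length as = length r \<longrightarrow>
       \<phi> h (r1 # r) ((a + b) # as) = (\<Sum>l\<le>r1. \<phi> h (l # (r1 - l) # r) (a # b # as))) \<and>
   \<comment> \<open>(S6)\<close>
   (\<forall>a. \<phi> [0] [1] [a] = a) \<and>
   \<comment> \<open>(S7)\<close>
   (\<forall>r h qs gs ass. h \<in> Cr r \<and> length qs = length r \<and> length gs = length r \<and> length ass = length r \<and>
       (\<forall>i<length r. gs ! i \<in> Cr (qs ! i) \<and> length (ass ! i) = length (qs ! i)) \<longrightarrow>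
       \<phi> h r (map (\<lambda>i. \<phi> (gs ! i) (qs ! i) (ass ! i)) [0..<length r])
         = scale (of_nat (coefS7 r qs))
             (phiR \<phi> (mu h (concat (map (\<lambda>i. replicate (r ! i) (gs ! i)) [0..<length r])))
                   (diamond r qs) (concat ass)))"

definition level_algebra :: "('k::field \<Rightarrow> 'a::ab_group_add \<Rightarrow> 'a) \<Rightarrow> ('a \<Rightarrow> 'a \<Rightarrow> 'a) \<Rightarrow> bool" where
  "level_algebra scale prd \<longleftrightarrow>
     (\<forall>a b c. prd (a + b) c = prd a c + prd b c) \<and>
     (\<forall>a b c. prd a (b + c) = prd a b + prd a c) \<and>
     (\<forall>x a b. prd (scale x a) b = scale x (prd a b)) \<and>
     (\<forall>x a b. prd a (scale x b) = scale x (prd a b)) \<and>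
     (\<forall>a b. prd a b = prd b a) \<and>
     (\<forall>a b c d. prd (prd a b) (prd c d) = prd (prd a c) (prd b d))"

end

(* Bilinearity: by (S5), phi_{h,(1,1)}(a + b, c) splits into the terms for the compositions
   (0,1,1) and (1,0,1), each of which is a single product after (S1) and (S2); homogeneity is
   (S3) and commutativity is (S1) for the swap of the two blocks. Interchange: by (S7) the
   product (a*b)*(c*d) equals phi_{(2,2,2,2),(1,1,1,1)}(a,b,c,d), and by (S1) this operation is
   symmetric in its four arguments, in particular under exchanging b and c. *)

theory Submission
  imports Defs
begin

lemma Lp_replicate_power_of_two: "replicate (2 ^ k) k \<in> Lp (2 ^ k)"
  by (simp add: Lp_def sum_list_replicate power_one_over)

lemma block_subset_lessThan_sum_list:
  assumes "i < length r"
  shows "block r i \<subseteq> {..<sum_list r}"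
proof -
  have "bstart r i + r ! i = sum_list (take (Suc i) r)"
    using assms by (simp add: bstart_def take_Suc_conv_app_nth)
  also have "\<dots> \<le> sum_list (take (Suc i) r) + sum_list (drop (Suc i) r)" by simp
  also have "\<dots> = sum_list r" by (metis append_take_drop_id sum_list_append)
  finally show ?thesis by (auto simp: block_def)
qed

lemma card_block: "card (block r i) = r ! i"
  by (simp add: block_def)

lemma replicate_in_Cr:
  assumes "replicate (sum_list r) c \<in> Lp (sum_list r)"
  shows "replicate (sum_list r) c \<in> Cr r"
proof -
  have "replicate (sum_list r) c ! x = c" if "i < length r" "x \<in> block r i" for i x
    using block_subset_lessThan_sum_list[OF that(1)] that(2) by auto
  then show ?thesis
    using assms by (auto simp: Cr_def CR_def blocks_def)
qed

lemma act_replicate: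
  assumes "{..<n} \<subseteq> \<sigma> ` {..<n}"
  shows "act \<sigma> (replicate n c) = replicate n c"
proof -
  have "inv_into {..<n} \<sigma> y < n" if "y < n" for y
    using inv_into_into[of y \<sigma> "{..<n}"] assms that by auto
  then show ?thesis by (auto simp: act_def intro: nth_equalityI)
qed

lemma phiR_blocks_replicate:
  "phiR \<phi> (replicate (sum_list r) c) (blocks r) as = \<phi> (replicate (sum_list r) c) r as"
proof -
  let ?h = "replicate (sum_list r) c"
  define P where "P \<tau> \<longleftrightarrow> bij_betw \<tau> {..<length ?h} {..<length ?h} \<and>
    (\<forall>i<length (blocks r). \<tau> ` (blocks r ! i) = block (map card (blocks r)) i)" for \<tau>
  have map_card: "map card (blocks r) = r"
    by (simp add: blocks_def card_block comp_def map_nth)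
  have "P id" unfolding P_def map_card by (simp add: blocks_def)
  then have "P (SOME \<tau>. P \<tau>)" by (rule someI[of P])
  then have "act (SOME \<tau>. P \<tau>) ?h = ?h"
    by (intro act_replicate) (simp add: P_def bij_betw_def)
  then show ?thesis
    unfolding phiR_def Let_def P_def[symmetric] by (simp add: map_card)
qed

lemma bstart_replicate_one: "i \<le> n \<Longrightarrow> bstart (replicate n 1) i = i"
  by (simp add: bstart_def take_replicate sum_list_replicate)

lemma block_replicate_one: "i < n \<Longrightarrow> block (replicate n 1) i = {i}"
  by (simp add: block_def bstart_replicate_one del: One_nat_def) simp

lemma blk_idx_replicate_one: "x < n \<Longrightarrow> blk_idx (replicate n 1) x = x"
  unfolding blk_idx_def by (rule the_equality) (auto simp: block_replicate_one simp del: One_nat_def)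

lemma cperm_replicate: "\<rho> permutes {..<n} \<Longrightarrow> cperm \<rho> (replicate n c) = replicate n c"
  using permutes_in_image[OF permutes_inv] by (fastforce simp: cperm_def intro: nth_equalityI)

lemma block_perm_replicate_one:
  assumes "\<rho> permutes {..<n}" "x < n"
  shows "block_perm (replicate n 1) \<rho> x = \<rho> x"
proof -
  have "\<rho> x < n" using permutes_in_image[OF assms(1)] assms(2) by simp
  then have "bstart (replicate n 1) (\<rho> x) = \<rho> x"
    by (intro bstart_replicate_one) simp
  moreover have "bstart (replicate n 1) x = x"
    using assms(2) by (intro bstart_replicate_one) simp
  ultimately show ?thesis
    unfolding block_perm_def blk_idx_replicate_one[OF assms(2)] cperm_replicate[OF assms(1)]
    by (simp only:)
qed

lemma act_block_perm_replicate_one: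
  assumes "\<rho> permutes {..<n}"
  shows "act (block_perm (replicate n 1) \<rho>) (replicate n c) = replicate n c"
proof (rule act_replicate)
  have "block_perm (replicate n 1) \<rho> ` {..<n} = \<rho> ` {..<n}"
    using block_perm_replicate_one[OF assms] by (intro image_cong) auto
  then show "{..<n} \<subseteq> block_perm (replicate n 1) \<rho> ` {..<n}"
    using permutes_image[OF assms] by simp
qed

lemma step_algebra_permute:
  assumes "step_algebra scale \<phi>" "h \<in> Cr r" "length as = length r" "\<rho> permutes {..<length r}"
  shows "\<phi> (act (block_perm r \<rho>) h) (cperm \<rho> r) (cperm \<rho> as) = \<phi> h r as"
  using assms by (simp add: step_algebra_def)

lemma step_algebra_drop_leading_zero:
  assumes "step_algebra scale \<phi>" "h \<in> Cr r" "length as = length r"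
  shows "\<phi> h (0 # r) (a0 # as) = \<phi> h r as"
  using assms by (simp add: step_algebra_def)

lemma step_algebra_scale_first:
  assumes "step_algebra scale \<phi>" "h \<in> Cr (r1 # r)" "length as = length r"
  shows "\<phi> h (r1 # r) (scale c a1 # as) = scale (c ^ r1) (\<phi> h (r1 # r) (a1 # as))"
  using assms by (simp add: step_algebra_def)

lemma step_algebra_add_first:
  assumes "step_algebra scale \<phi>" "h \<in> Cr (r1 # r)" "length as = length r"
  shows "\<phi> h (r1 # r) ((a + b) # as) = (\<Sum>l\<le>r1. \<phi> h (l # (r1 - l) # r) (a # b # as))"
  using assms by (simp add: step_algebra_def)

lemma step_algebra_compose:
  assumes "step_algebra scale \<phi>" "h \<in> Cr r"
    and "length qs = length r" "length gs = length r" "length ass = length r"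
    and "\<And>i. i < length r \<Longrightarrow> gs ! i \<in> Cr (qs ! i) \<and> length (ass ! i) = length (qs ! i)"
  shows "\<phi> h r (map (\<lambda>i. \<phi> (gs ! i) (qs ! i) (ass ! i)) [0..<length r])
    = scale (of_nat (coefS7 r qs))
        (phiR \<phi> (mu h (concat (map (\<lambda>i. replicate (r ! i) (gs ! i)) [0..<length r])))
          (diamond r qs) (concat ass))"
  using assms by (simp add: step_algebra_def)

lemma step_algebra_permute_singletons:
  assumes "step_algebra scale \<phi>" "replicate n c \<in> Lp n"
    and "\<rho> permutes {..<n}" "length as = n"
  shows "\<phi> (replicate n c) (replicate n 1) (cperm \<rho> as) = \<phi> (replicate n c) (replicate n 1) as"
proof -
  have "replicate n c \<in> Cr (replicate n 1)"
    using replicate_in_Cr[of "replicate n 1"] assms(2) by (simp add: sum_list_replicate)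
  from step_algebra_permute[OF assms(1) this, of as \<rho>] show ?thesis
    using assms(3,4) by (simp add: act_block_perm_replicate_one cperm_replicate del: One_nat_def)
qed

lemma blk_idx_leading_zero: "x < 2 \<Longrightarrow> blk_idx [0, 1, 1] x = Suc x"
  unfolding blk_idx_def
  by (rule the_equality) (auto simp: block_def bstart_def numeral_2_eq_2 less_Suc_eq)

lemma block_perm_swap_leading_zero:
  assumes "x < 2"
  shows "block_perm [0, 1, 1] (Transposition.transpose 0 1) x = x"
proof -
  have "cperm (Transposition.transpose 0 1) [0, 1, 1] = [1, 0, 1 :: nat]"
    by (simp add: cperm_def upt_rec Transposition.transpose_def)
  with assms show ?thesis
    unfolding block_perm_def blk_idx_leading_zero[OF assms]
    by (auto simp: bstart_def Transposition.transpose_def numeral_2_eq_2 less_Suc_eq)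
qed

lemma Cr_one_one: "[1, 1] \<in> Cr [1, 1]"
  using replicate_in_Cr[of "[1, 1]" 1] Lp_replicate_power_of_two[of 1] by (simp add: numeral_2_eq_2)

lemma step_product_commute:
  assumes "step_algebra scale \<phi>"
  shows "\<phi> [1, 1] [1, 1] [a, b] = \<phi> [1, 1] [1, 1] [b, a]"
proof -
  have "cperm (Transposition.transpose 0 1) [b, a] = [a, b]"
    by (simp add: cperm_def upt_rec Transposition.transpose_def)
  with step_algebra_permute_singletons[OF assms Lp_replicate_power_of_two[of 1],
      of "Transposition.transpose 0 1" "[b, a]"]
  show ?thesis by (simp add: numeral_2_eq_2 permutes_swap_id)
qed

(* (S1) moves the empty block to the front, where (S2) discards it. *)
lemma step_product_drop_middle_zero:
  assumes "step_algebra scale \<phi>"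
  shows "\<phi> [1, 1] [1, 0, 1] [a, b, c] = \<phi> [1, 1] [1, 1] [a, c]"
proof -
  let ?\<rho> = "Transposition.transpose 0 1 :: nat \<Rightarrow> nat"
  have Cr: "[1, 1] \<in> Cr [0, 1, 1]"
    using replicate_in_Cr[of "[0, 1, 1]" 1] Lp_replicate_power_of_two[of 1]
    by (simp add: numeral_2_eq_2)
  have "{..<2} \<subseteq> block_perm [0, 1, 1] ?\<rho> ` {..<2}"
    using block_perm_swap_leading_zero by force
  then have act: "act (block_perm [0, 1, 1] ?\<rho>) [1, 1] = [1, 1]"
    using act_replicate[of 2 _ 1] by (simp add: numeral_2_eq_2)
  have "\<phi> [1, 1] [1, 0, 1] [a, b, c] = \<phi> [1, 1] [0, 1, 1] [b, a, c]"
    using step_algebra_permute[OF assms Cr, of "[b, a, c]" ?\<rho>] unfolding act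
    by (simp add: cperm_def upt_rec Transposition.transpose_def permutes_swap_id)
  also have "\<dots> = \<phi> [1, 1] [1, 1] [a, c]"
    using step_algebra_drop_leading_zero[OF assms Cr_one_one] by simp
  finally show ?thesis .
qed

lemma step_product_add_left:
  assumes "step_algebra scale \<phi>"
  shows "\<phi> [1, 1] [1, 1] [a + b, c] = \<phi> [1, 1] [1, 1] [a, c] + \<phi> [1, 1] [1, 1] [b, c]"
proof -
  have "\<phi> [1, 1] [1, 1] [a + b, c] = \<phi> [1, 1] [0, 1, 1] [a, b, c] + \<phi> [1, 1] [1, 0, 1] [a, b, c]"
    using step_algebra_add_first[OF assms Cr_one_one, of "[c]" a b] by (simp add: atMost_Suc)
  then show ?thesis
    using step_algebra_drop_leading_zero[OF assms Cr_one_one] step_product_drop_middle_zero[OF assms]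
    by (simp add: add.commute)
qed

lemma step_product_scale_left:
  assumes "step_algebra scale \<phi>"
  shows "\<phi> [1, 1] [1, 1] [scale x a, b] = scale x (\<phi> [1, 1] [1, 1] [a, b])"
  using step_algebra_scale_first[OF assms Cr_one_one, of "[b]" x a] by simp

lemma diamond_one_one: "diamond [1, 1] [[1, 1], [1, 1]] = blocks [1, 1, 1, 1]"
  by (simp add: diamond_def gammaP_def tensorP_def blocks_def block_def bstart_def upt_rec
      lessThan_Suc eval_nat_numeral)

(* (S7) with g_1 = g_2 = (1,1): the composite map is (2,2,2,2), the partition consists of
   singletons and the coefficient is 1. *)
lemma step_product_nested:
  assumes "vector_space scale" "step_algebra scale \<phi>"
  shows "\<phi> [1, 1] [1, 1] [\<phi> [1, 1] [1, 1] [a, b], \<phi> [1, 1] [1, 1] [c, d]]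
    = \<phi> (replicate 4 2) (replicate 4 1) [a, b, c, d]"
proof -
  let ?r = "[1, 1] :: nat list" and ?qs = "[[1, 1], [1, 1]] :: nat list list"
  have mu: "mu ?r (concat (map (\<lambda>i. replicate (?r ! i) (?qs ! i)) [0..<length ?r])) = replicate 4 2"
    by (simp add: mu_def upt_rec eval_nat_numeral)
  have coef: "coefS7 ?r ?qs = 1"
    by (simp add: coefS7_def lessThan_Suc)
  have phiR: "phiR \<phi> (replicate 4 2) (blocks [1, 1, 1, 1]) as = \<phi> (replicate 4 2) (replicate 4 1) as"
    for as
    using phiR_blocks_replicate[of \<phi> "[1, 1, 1, 1]" 2 as] by (simp add: eval_nat_numeral)
  have factors: "?qs ! i \<in> Cr (?qs ! i) \<and> length ([[a, b], [c, d]] ! i) = length (?qs ! i)"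
    if "i < length ?r" for i
    using that Cr_one_one by (auto simp: less_Suc_eq)
  from step_algebra_compose[OF assms(2) Cr_one_one _ _ _ factors]
  have "\<phi> ?r ?r (map (\<lambda>i. \<phi> (?qs ! i) (?qs ! i) ([[a, b], [c, d]] ! i)) [0..<length ?r])
      = \<phi> (replicate 4 2) (replicate 4 1) [a, b, c, d]"
    unfolding mu coef diamond_one_one phiR by (simp add: vector_space.vector_space_assms(4)[OF assms(1)])
  then show ?thesis by (simp add: upt_rec)
qed

lemma step_product_medial:
  assumes "vector_space scale" "step_algebra scale \<phi>"
  shows "\<phi> [1, 1] [1, 1] [\<phi> [1, 1] [1, 1] [a, b], \<phi> [1, 1] [1, 1] [c, d]]
    = \<phi> [1, 1] [1, 1] [\<phi> [1, 1] [1, 1] [a, c], \<phi> [1, 1] [1, 1] [b, d]]"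
proof -
  have "cperm (Transposition.transpose 1 2) [a, b, c, d] = [a, c, b, d]"
    by (simp add: cperm_def upt_rec Transposition.transpose_def)
  then have "\<phi> (replicate 4 2) (replicate 4 1) [a, c, b, d] = \<phi> (replicate 4 2) (replicate 4 1) [a, b, c, d]"
    using step_algebra_permute_singletons[OF assms(2) Lp_replicate_power_of_two[of 2],
        of "Transposition.transpose 1 2" "[a, b, c, d]"]
    by (simp add: permutes_swap_id)
  then show ?thesis
    unfolding step_product_nested[OF assms] by simp
qed

theorem proposition6p1:
  fixes scale :: "'k::field \<Rightarrow> 'a::ab_group_add \<Rightarrow> 'a"
    and \<phi> :: "nat list \<Rightarrow> nat list \<Rightarrow> 'a list \<Rightarrow> 'a"
  assumes "vector_space scale"
    and "step_algebra scale \<phi>"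
  shows "level_algebra scale (\<lambda>a b. \<phi> [1, 1] [1, 1] [a, b])"
  unfolding level_algebra_def
  using step_product_add_left[OF assms(2)] step_product_scale_left[OF assms(2)]
    step_product_commute[OF assms(2)] step_product_medial[OF assms]
  by metis

end
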